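(* Optimum Stack Generation over an alphabet $\Sigma$ can be reduced to the scored parsing problem of a bounded-difference scored grammar in Chomsky normal form. The size of the grammar is polynomial in $|\Sigma|$, and the input string is not changed by the reduction.
   Context: Optimum Stack Generation: given a finite alphabet $\Sigma$ and a string $\sigma\in\Sigma^*$, starting from an empty stack, find the minimum length of a sequence of operations push$(c)$ ($c\in\Sigma$), emit (print the top symbol) and pop that prints exactly $\sigma$ and ends with an empty stack. A scored grammar is a CFG whose productions $p$ carry non-negative integer scores $s(p)$; $s(X,\sigma)$ is the minimum total score of a derivation $X\to^*\sigma$ ($\infty$ if none). It is $W$-bounded-difference if for every non-terminal $X$, terminal $x$, non-empty terminal string $\sigma$: $|s(X,\sigma)-s(X,\sigma x)|\le W$ and $|s(X,\sigma)-s(X,x\sigma)|\le W$; bounded-difference means $W=O(1)$. Chomsky normal form: productions $Z\to XY$, $Z\to c$, $S\to\varepsilon$ with $X,Y$ non-terminals different from the start symbol $S$. The scored parsing problem asks for $s(S,\sigma)$ for the start symbol $S$. *)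

theory Defs
  imports Main "HOL-Library.Extended_Nat"
begin

datatype 'a stack_op = Push 'a | Emit | Pop

fun run_ops :: "'a stack_op list \<Rightarrow> 'a list \<Rightarrow> 'a list \<Rightarrow> ('a list \<times> 'a list) option" where
  "run_ops [] st out = Some (st, out)"
| "run_ops (Push c # ops) st out = run_ops ops (c # st) out"
| "run_ops (Emit # ops) [] out = None"
| "run_ops (Emit # ops) (c # st) out = run_ops ops (c # st) (out @ [c])"
| "run_ops (Pop # ops) [] out = None"
| "run_ops (Pop # ops) (c # st) out = run_ops ops st out"

definition generates :: "'a set \<Rightarrow> 'a stack_op list \<Rightarrow> 'a list \<Rightarrow> bool" where
  "generates \<Sigma> ops \<sigma> \<longleftrightarrow>
     (\<forall>c. Push c \<in> set ops \<longrightarrow> c \<in> \<Sigma>) \<and> run_ops ops [] [] = Some ([], \<sigma>)"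

definition osg :: "'a set \<Rightarrow> 'a list \<Rightarrow> nat" where
  "osg \<Sigma> \<sigma> = (LEAST n. \<exists>ops. generates \<Sigma> ops \<sigma> \<and> length ops = n)"

datatype ('n, 'a) cnf_prod = Bin 'n 'n 'n | Term 'n 'a | Eps 'n

record ('n, 'a) sgrammar =
  prods :: "('n, 'a) cnf_prod set"
  score :: "('n, 'a) cnf_prod \<Rightarrow> nat"
  start :: 'n

definition cnf_over :: "'a set \<Rightarrow> ('n, 'a) sgrammar \<Rightarrow> bool" where
  "cnf_over \<Sigma> G \<longleftrightarrow> finite (prods G) \<and>
     (\<forall>p \<in> prods G. case p of
        Bin Z X Y \<Rightarrow> X \<noteq> start G \<and> Y \<noteq> start G
      | Term Z c \<Rightarrow> c \<in> \<Sigma>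
      | Eps Z \<Rightarrow> Z = start G)"

inductive derives :: "('n, 'a) sgrammar \<Rightarrow> 'n \<Rightarrow> 'a list \<Rightarrow> nat \<Rightarrow> bool" for G where
  d_term: "Term X c \<in> prods G \<Longrightarrow> derives G X [c] (score G (Term X c))"
| d_eps: "Eps X \<in> prods G \<Longrightarrow> derives G X [] (score G (Eps X))"
| d_bin: "Bin Z X Y \<in> prods G \<Longrightarrow> derives G X u k1 \<Longrightarrow> derives G Y v k2 \<Longrightarrow>
        derives G Z (u @ v) (score G (Bin Z X Y) + k1 + k2)"

definition sscore :: "('n, 'a) sgrammar \<Rightarrow> 'n \<Rightarrow> 'a list \<Rightarrow> enat" where
  "sscore G X w = (INF k \<in> {k. derives G X w k}. enat k)"

text \<open>W-bounded difference (with the convention |inf - inf| = 0 and |inf - n| = inf).\<close>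
definition bounded_diff :: "'a set \<Rightarrow> ('n, 'a) sgrammar \<Rightarrow> nat \<Rightarrow> bool" where
  "bounded_diff \<Sigma> G W \<longleftrightarrow>
     (\<forall>X. \<forall>x \<in> \<Sigma>. \<forall>\<sigma>. \<sigma> \<noteq> [] \<and> set \<sigma> \<subseteq> \<Sigma> \<longrightarrow>
        sscore G X \<sigma> \<le> sscore G X (\<sigma> @ [x]) + enat W \<and>
        sscore G X (\<sigma> @ [x]) \<le> sscore G X \<sigma> + enat W \<and>
        sscore G X \<sigma> \<le> sscore G X (x # \<sigma>) + enat W \<and>
        sscore G X (x # \<sigma>) \<le> sscore G X \<sigma> + enat W)"

definition gsize :: "('n, 'a) sgrammar \<Rightarrow> nat" where
  "gsize G = card (prods G)"

end

(* The grammar has a nonterminal A_c for every symbol c, generating what can be printed while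
   c stays on top of the stack, and a nonterminal T, generating what can be printed from any
   stack without disturbing it. A production is scored by the stack operations it stands for,
   so a derivation compiles into an operation sequence no longer than its score. Conversely,
   an operation sequence is parsed along its run: every stack entry carries the block printed
   while it is on top, and pushing an entry later merged into the block below costs the Push
   and the Pop, which is the score 2 of a production Z -> A_d A_d. Deleting an end letter of a derived string never increases its score, adding one
   costs at most 3, and there are O(|Sigma|^2) productions. *)

theory Submission
  imports Defs
begin

lemma run_ops_append:
  "run_ops (ops1 @ ops2) st out =
     (case run_ops ops1 st out of None \<Rightarrow> None | Some (st', out') \<Rightarrow> run_ops ops2 st' out')"
  by (induction ops1 st out rule: run_ops.induct) auto

definition push_symbols :: "'a stack_op list \<Rightarrow> 'a set" where
  "push_symbols ops = {c. Push c \<in> set ops}"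

lemma push_symbols_simps [simp]:
  "push_symbols [] = {}"
  "push_symbols (Push c # ops) = insert c (push_symbols ops)"
  "push_symbols (Emit # ops) = push_symbols ops"
  "push_symbols (Pop # ops) = push_symbols ops"
  "push_symbols (ops1 @ ops2) = push_symbols ops1 \<union> push_symbols ops2"
  by (auto simp: push_symbols_def)

lemma generates_iff:
  "generates \<Sigma> ops \<sigma> \<longleftrightarrow> push_symbols ops \<subseteq> \<Sigma> \<and> run_ops ops [] [] = Some ([], \<sigma>)"
  by (auto simp: generates_def push_symbols_def)

lemma generates_exists:
  assumes "set \<sigma> \<subseteq> \<Sigma>"
  shows "\<exists>ops. generates \<Sigma> ops \<sigma>"
proof -
  let ?ops = "concat (map (\<lambda>c. [Push c, Emit, Pop]) \<sigma>)"
  have "run_ops ?ops st out = Some (st, out @ \<sigma>)" for st out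
    by (induction \<sigma> arbitrary: out) (auto simp: run_ops_append)
  then show ?thesis
    using assms by (auto simp: generates_iff push_symbols_def intro!: exI[of _ ?ops])
qed

lemma osg_le_length: "generates \<Sigma> ops \<sigma> \<Longrightarrow> osg \<Sigma> \<sigma> \<le> length ops"
  unfolding osg_def by (rule Least_le) blast

lemma osg_attained:
  assumes "set \<sigma> \<subseteq> \<Sigma>"
  obtains ops where "generates \<Sigma> ops \<sigma>" "length ops = osg \<Sigma> \<sigma>"
proof -
  have "\<exists>n ops. generates \<Sigma> ops \<sigma> \<and> length ops = n"
    using generates_exists[OF assms] by blast
  then have "\<exists>ops. generates \<Sigma> ops \<sigma> \<and> length ops = osg \<Sigma> \<sigma>"
    unfolding osg_def by (rule LeastI_ex)
  then show ?thesis using that by blast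
qed

lemma sscore_eq_Least:
  "sscore G X w = (if \<exists>k. derives G X w k then enat (LEAST k. derives G X w k) else \<infinity>)"
proof (cases "\<exists>k. derives G X w k")
  case True
  let ?m = "LEAST k. derives G X w k"
  have "derives G X w ?m" using True by (rule LeastI_ex)
  then have "(INF k \<in> {k. derives G X w k}. enat k) = enat ?m"
    by (intro antisym INF_lower INF_greatest) (auto intro: Least_le)
  then show ?thesis using True by (simp add: sscore_def)
qed (simp add: sscore_def top_enat_def)

lemma sscore_eq_enatI:
  assumes "derives G X w m" and "\<And>k. derives G X w k \<Longrightarrow> m \<le> k"
  shows "sscore G X w = enat m"
proof -
  have "(LEAST k. derives G X w k) = m"
    using assms by (intro Least_equality) auto
  then show ?thesis using assms(1) by (auto simp: sscore_eq_Least)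
qed

lemma sscore_le_plus:
  assumes "\<And>k. derives G X u k \<Longrightarrow> \<exists>k'\<le>k + W. derives G X v k'"
  shows "sscore G X v \<le> sscore G X u + enat W"
proof (cases "\<exists>k. derives G X u k")
  case True
  let ?m = "LEAST k. derives G X u k"
  have "derives G X u ?m" using True by (rule LeastI_ex)
  then obtain k' where "k' \<le> ?m + W" "derives G X v k'" using assms by blast
  moreover from this(2) have "(LEAST k. derives G X v k) \<le> k'" by (rule Least_le)
  ultimately show ?thesis using True by (auto simp: sscore_eq_Least)
qed (simp add: sscore_eq_Least)

lemma derives_retarget:
  assumes "derives G Z w k"
    and "\<And>X Y. Bin Z X Y \<in> prods G \<Longrightarrow>
           Bin Z' X Y \<in> prods G \<and> score G (Bin Z' X Y) \<le> score G (Bin Z X Y) + c"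
    and "\<And>a. Term Z a \<in> prods G \<Longrightarrow>
           Term Z' a \<in> prods G \<and> score G (Term Z' a) \<le> score G (Term Z a) + c"
    and "Eps Z \<notin> prods G \<or> w \<noteq> []"
  shows "\<exists>k'\<le>k + c. derives G Z' w k'"
  using assms(1)
proof cases
  case (d_term a)
  then show ?thesis using assms(3)[of a] by (auto intro: derives.d_term)
next
  case d_eps
  then show ?thesis using assms(4) by simp
next
  case (d_bin X Y u k1 v k2)
  then show ?thesis using assms(2)[of X Y]
    by (intro exI[of _ "score G (Bin Z' X Y) + k1 + k2"]) (auto intro: derives.d_bin)
qed

locale osg_grammar =
  fixes \<Sigma> :: "'a set" and nt :: "'a \<Rightarrow> nat"
  assumes finite_\<Sigma>: "finite \<Sigma>" and inj_nt: "inj_on nt \<Sigma>" and nt_ge_2: "\<And>c. 2 \<le> nt c"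
begin

text \<open>Nonterminal 0 is the start symbol S, nonterminal 1 is T and \<open>nt c\<close> is A_c.\<close>

definition nts :: "nat set" where
  "nts = {0, 1} \<union> nt ` \<Sigma>"

definition prods_osg :: "(nat, 'a) cnf_prod set" where
  "prods_osg = {Eps 0} \<union> (\<lambda>Z. Bin Z 1 1) ` {0, 1} \<union> (\<lambda>(Z, d). Term Z d) ` (nts \<times> \<Sigma>)
     \<union> (\<lambda>(Z, d). Bin Z (nt d) (nt d)) ` (nts \<times> \<Sigma>)"

text \<open>Under A_d, printing d is a single Emit and a block A_d A_d is free; elsewhere they
  cost Push d, Emit, Pop and Push d, \<dots>, Pop respectively.\<close>

definition score_osg :: "(nat, 'a) cnf_prod \<Rightarrow> nat" where
  "score_osg p = (case p of
       Bin Z X Y \<Rightarrow> if X = 1 \<or> Z = X then 0 else 2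
     | Term Z d \<Rightarrow> if Z = nt d then 1 else 3
     | Eps Z \<Rightarrow> 0)"

definition G :: "(nat, 'a) sgrammar" where
  "G = \<lparr>prods = prods_osg, score = score_osg, start = 0\<rparr>"

lemma G_simps [simp]: "prods G = prods_osg" "score G = score_osg" "start G = 0"
  by (simp_all add: G_def)

lemma score_osg_simps [simp]:
  "score_osg (Bin Z X Y) = (if X = 1 \<or> Z = X then 0 else 2)"
  "score_osg (Term Z d) = (if Z = nt d then 1 else 3)"
  "score_osg (Eps Z) = 0"
  by (simp_all add: score_osg_def)

lemma nt_neq [simp]:
  "nt c \<noteq> 0" "nt c \<noteq> 1" "nt c \<noteq> Suc 0" "0 \<noteq> nt c" "1 \<noteq> nt c" "Suc 0 \<noteq> nt c"
  "0 < nt c" "\<not> nt c \<le> Suc 0"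
  using nt_ge_2[of c] by auto

lemma nt_eq_iff [simp]: "c \<in> \<Sigma> \<Longrightarrow> d \<in> \<Sigma> \<Longrightarrow> nt c = nt d \<longleftrightarrow> c = d"
  using inj_nt by (auto simp: inj_on_def)

lemma mem_nts [simp]: "Z \<le> 1 \<Longrightarrow> Z \<in> nts" "c \<in> \<Sigma> \<Longrightarrow> nt c \<in> nts"
  by (auto simp: nts_def)

lemma mem_nts_iff: "Z \<in> nts \<longleftrightarrow> Z = 0 \<or> Z = 1 \<or> (\<exists>c\<in>\<Sigma>. Z = nt c)"
  by (auto simp: nts_def)

lemma Bin_mem_prods_osg:
  "Bin Z X Y \<in> prods_osg \<longleftrightarrow> X = Y \<and> (X = 1 \<and> Z \<le> 1 \<or> (\<exists>d\<in>\<Sigma>. X = nt d) \<and> Z \<in> nts)"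
  by (auto simp: prods_osg_def nts_def)

lemma Term_mem_prods_osg: "Term Z d \<in> prods_osg \<longleftrightarrow> Z \<in> nts \<and> d \<in> \<Sigma>"
  by (auto simp: prods_osg_def)

lemma Eps_mem_prods_osg: "Eps Z \<in> prods_osg \<longleftrightarrow> Z = 0"
  by (auto simp: prods_osg_def)

lemmas mem_prods_osg = Bin_mem_prods_osg Term_mem_prods_osg Eps_mem_prods_osg

lemma derives_Term: "Z \<in> nts \<Longrightarrow> d \<in> \<Sigma> \<Longrightarrow> derives G Z [d] (score_osg (Term Z d))"
  using derives.d_term[of Z d G] by (simp add: Term_mem_prods_osg)

lemma derives_Bin:
  "Bin Z X Y \<in> prods_osg \<Longrightarrow> derives G X u k1 \<Longrightarrow> derives G Y v k2 \<Longrightarrow>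
   derives G Z (u @ v) (score_osg (Bin Z X Y) + k1 + k2)"
  using derives.d_bin[of Z X Y G u k1 v k2] by simp

lemma derives_nts: "derives G X w k \<Longrightarrow> X \<in> nts"
  by (cases rule: derives.cases) (auto simp: mem_prods_osg mem_nts_iff)

lemma derives_nonempty: "derives G X w k \<Longrightarrow> X \<noteq> 0 \<Longrightarrow> w \<noteq> []"
  by (induction rule: derives.induct) (auto simp: mem_prods_osg)

lemma derives_nt_retarget:
  assumes "derives G (nt d) w k" and "Z \<in> nts"
  shows "\<exists>k'\<le>k + 2. derives G Z w k'"
  using assms by (intro derives_retarget) (auto simp: mem_prods_osg)

lemma derives_S_T_retarget:
  assumes "derives G X w k" and "X \<le> 1" and "Z \<le> 1" and "w \<noteq> []"
  shows "\<exists>k'\<le>k. derives G Z w k'"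
proof -
  have "\<exists>k'\<le>k + 0. derives G Z w k'"
    by (rule derives_retarget[OF assms(1)]) (use assms(2-4) in \<open>auto simp: mem_prods_osg\<close>)
  then show ?thesis by simp
qed

lemma derives_collapse:
  assumes "Bin Z X Y \<in> prods_osg" and "derives G X u k"
  shows "\<exists>k'\<le>score_osg (Bin Z X Y) + k. derives G Z u k'"
proof -
  consider "Z = X" | "X = 1" "Z = 0" | d where "d \<in> \<Sigma>" "X = nt d" "Z \<noteq> X" "Z \<in> nts"
    using assms(1) by (auto simp: Bin_mem_prods_osg le_Suc_eq)
  then show ?thesis
  proof cases
    case 1
    then show ?thesis using assms(2) by auto
  next
    case 2
    then show ?thesis
      using assms(2) derives_nonempty derives_S_T_retarget[of X u k Z] by simp
  next
    case 3
    then show ?thesis using assms(2) derives_nt_retarget[of d u k Z] by simp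
  qed
qed

text \<open>Dropping the last or the first letter never increases the score: if the production at
  the root splits off exactly that letter, the remaining half is lifted to the root.\<close>

lemma derives_butlast:
  "derives G X w k \<Longrightarrow> w = \<sigma> @ [x] \<Longrightarrow> \<sigma> \<noteq> [] \<Longrightarrow> \<exists>k'\<le>k. derives G X \<sigma> k'"
proof (induction arbitrary: \<sigma> rule: derives.induct)
  case (d_bin Z X Y u k1 v k2)
  have "v \<noteq> []"
    using d_bin.hyps(1) derives_nonempty[OF d_bin.hyps(3)] by (auto simp: Bin_mem_prods_osg)
  then obtain v' where v: "v = v' @ [x]" and \<sigma>: "\<sigma> = u @ v'"
    using d_bin.prems(1) by (cases v rule: rev_cases) auto
  show ?case
  proof (cases "v' = []")
    case True
    obtain k' where "k' \<le> score_osg (Bin Z X Y) + k1" "derives G Z u k'"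
      using derives_collapse[of Z X Y u k1] d_bin.hyps by auto
    then show ?thesis using True \<sigma> by (intro exI[of _ k']) auto
  next
    case False
    then obtain k2' where "k2' \<le> k2" "derives G Y v' k2'" using d_bin.IH(2) v by blast
    then show ?thesis
      using derives_Bin[of Z X Y u k1 v' k2'] d_bin.hyps \<sigma>
      by (intro exI[of _ "score_osg (Bin Z X Y) + k1 + k2'"]) auto
  qed
qed auto

lemma derives_tl:
  "derives G X w k \<Longrightarrow> w = x # \<sigma> \<Longrightarrow> \<sigma> \<noteq> [] \<Longrightarrow> \<exists>k'\<le>k. derives G X \<sigma> k'"
proof (induction arbitrary: \<sigma> rule: derives.induct)
  case (d_bin Z X Y u k1 v k2)
  have XY: "X = Y" and "u \<noteq> []"
    using d_bin.hyps(1) derives_nonempty[OF d_bin.hyps(2)] by (auto simp: Bin_mem_prods_osg)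
  then obtain u' where u: "u = x # u'" and \<sigma>: "\<sigma> = u' @ v"
    using d_bin.prems(1) by (cases u) auto
  show ?case
  proof (cases "u' = []")
    case True
    obtain k' where "k' \<le> score_osg (Bin Z Y Y) + k2" "derives G Z v k'"
      using derives_collapse[of Z Y Y v k2] d_bin.hyps XY by auto
    then show ?thesis using True \<sigma> XY by (intro exI[of _ k']) auto
  next
    case False
    then obtain k1' where "k1' \<le> k1" "derives G X u' k1'" using d_bin.IH(1) u by blast
    then show ?thesis
      using derives_Bin[of Z X Y u' k1' v k2] d_bin.hyps \<sigma>
      by (intro exI[of _ "score_osg (Bin Z X Y) + k1' + k2"]) auto
  qed
qed auto

text \<open>Adding a letter at either end costs at most 3, via Z \<rightarrow> Z Z and Z \<rightarrow> x; for the start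
  symbol one passes through T.\<close>

lemma derives_extend:
  assumes "derives G X \<sigma> k" and "\<sigma> \<noteq> []" and "x \<in> \<Sigma>"
  shows "(\<exists>k'\<le>k + 3. derives G X (\<sigma> @ [x]) k') \<and> (\<exists>k'\<le>k + 3. derives G X (x # \<sigma>) k')"
proof -
  have extend: "(\<exists>k'\<le>k + 3. derives G Y (\<sigma> @ [x]) k') \<and> (\<exists>k'\<le>k + 3. derives G Y (x # \<sigma>) k')"
    if "derives G Y \<sigma> k" and "Y \<noteq> 0" for Y k
  proof -
    have "Y \<in> nts" using that(1) by (rule derives_nts)
    obtain t where x: "derives G Y [x] t" and "t \<le> 3"
      using derives_Term[OF \<open>Y \<in> nts\<close> assms(3)] score_osg_simps(2)[of Y x] by force
    have Bin: "Bin Y Y Y \<in> prods_osg"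
      using \<open>Y \<in> nts\<close> that(2) by (auto simp: Bin_mem_prods_osg mem_nts_iff)
    have "derives G Y (\<sigma> @ [x]) (k + t)" and "derives G Y ([x] @ \<sigma>) (k + t)"
      using derives_Bin[OF Bin that(1) x] derives_Bin[OF Bin x that(1)] by (simp_all add: add.commute)
    with \<open>t \<le> 3\<close> show ?thesis by (auto intro!: exI[of _ "k + t"])
  qed
  show ?thesis
  proof (cases "X = 0")
    case False
    then show ?thesis using extend assms(1) by blast
  next
    case True
    obtain k1 where "k1 \<le> k" "derives G 1 \<sigma> k1"
      using derives_S_T_retarget[OF assms(1)] True assms(2) by auto
    have to_S: "\<exists>k'\<le>k + 3. derives G 0 w k'" if T: "\<exists>k'\<le>k1 + 3. derives G 1 w k'" for w
    proof -
      obtain k2 where "k2 \<le> k1 + 3" and T: "derives G 1 w k2" using T by blast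
      moreover obtain k3 where "k3 \<le> k2" "derives G 0 w k3"
        using derives_S_T_retarget[OF T, of 0] derives_nonempty[OF T] by auto
      ultimately show ?thesis using \<open>k1 \<le> k\<close> by (intro exI[of _ k3]) auto
    qed
    then show ?thesis
      using extend[of 1 k1] \<open>derives G 1 \<sigma> k1\<close> True by simp
  qed
qed

lemma bounded_diff_G: "bounded_diff \<Sigma> G 3"
proof -
  have shrink: "sscore G X \<sigma> \<le> sscore G X \<sigma>' + enat 3"
    if \<sigma>': "\<sigma>' = \<sigma> @ [x] \<or> \<sigma>' = x # \<sigma>" and "\<sigma> \<noteq> []" for X \<sigma> \<sigma>' x
  proof (rule sscore_le_plus)
    fix k assume "derives G X \<sigma>' k"
    then obtain k' where "k' \<le> k" "derives G X \<sigma> k'"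
      using \<sigma>' derives_butlast[of X \<sigma>' k \<sigma> x] derives_tl[of X \<sigma>' k x \<sigma>] \<open>\<sigma> \<noteq> []\<close> by auto
    then show "\<exists>k'\<le>k + 3. derives G X \<sigma> k'" by (intro exI[of _ k']) simp
  qed
  have extend: "sscore G X \<sigma>' \<le> sscore G X \<sigma> + enat 3"
    if "\<sigma>' = \<sigma> @ [x] \<or> \<sigma>' = x # \<sigma>" "\<sigma> \<noteq> []" "x \<in> \<Sigma>" for X \<sigma> \<sigma>' x
  proof (rule sscore_le_plus)
    fix k assume "derives G X \<sigma> k"
    then show "\<exists>k'\<le>k + 3. derives G X \<sigma>' k'"
      using that derives_extend by blast
  qed
  show ?thesis
    unfolding bounded_diff_def
    by (intro allI ballI impI conjI; elim conjE) (auto intro: shrink extend)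
qed

definition fits :: "nat \<Rightarrow> 'a list \<Rightarrow> bool" where
  "fits X st \<longleftrightarrow> X \<le> 1 \<or> (\<exists>c\<in>\<Sigma>. X = nt c \<and> st \<noteq> [] \<and> hd st = c)"

lemma derives_imp_ops:
  "derives G X w k \<Longrightarrow> \<exists>ops. push_symbols ops \<subseteq> \<Sigma> \<and> length ops \<le> k \<and>
     (\<forall>st out. fits X st \<longrightarrow> run_ops ops st out = Some (st, out @ w))"
proof (induction rule: derives.induct)
  case (d_term X c)
  then have c: "c \<in> \<Sigma>" by (simp add: Term_mem_prods_osg)
  show ?case
  proof (cases "X = nt c")
    case True
    have "run_ops [Emit] st out = Some (st, out @ [c])" if "fits X st" for st out
      using that True c by (cases st) (auto simp: fits_def)
    then show ?thesis using True by (intro exI[of _ "[Emit]"]) auto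
  next
    case False
    then show ?thesis using c by (intro exI[of _ "[Push c, Emit, Pop]"]) auto
  qed
next
  case (d_eps X)
  then show ?case by (intro exI[of _ "[]"]) auto
next
  case (d_bin Z X Y u k1 v k2)
  obtain ops1 where ops1: "push_symbols ops1 \<subseteq> \<Sigma>" "length ops1 \<le> k1"
    "\<And>st out. fits X st \<Longrightarrow> run_ops ops1 st out = Some (st, out @ u)"
    using d_bin.IH(1) by blast
  obtain ops2 where ops2: "push_symbols ops2 \<subseteq> \<Sigma>" "length ops2 \<le> k2"
    "\<And>st out. fits Y st \<Longrightarrow> run_ops ops2 st out = Some (st, out @ v)"
    using d_bin.IH(2) by blast
  have XY: "X = Y" and Bin: "X = 1 \<and> Z \<le> 1 \<or> (\<exists>d\<in>\<Sigma>. X = nt d) \<and> Z \<in> nts"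
    using d_bin.hyps(1) by (auto simp: Bin_mem_prods_osg)
  show ?case
  proof (cases "X = 1 \<or> Z = X")
    case True
    then have "fits Z st \<Longrightarrow> fits X st" for st using Bin by (auto simp: fits_def)
    then have "run_ops (ops1 @ ops2) st out = Some (st, out @ u @ v)" if "fits Z st" for st out
      using that ops1(3) ops2(3) XY by (simp add: run_ops_append)
    then show ?thesis using True ops1 ops2 by (intro exI[of _ "ops1 @ ops2"]) auto
  next
    case False
    then obtain d where d: "d \<in> \<Sigma>" "X = nt d" using Bin by auto
    then have "fits X (d # st)" for st by (auto simp: fits_def)
    then have "run_ops (Push d # ops1 @ ops2 @ [Pop]) st out = Some (st, out @ u @ v)" for st out
      using ops1(3) ops2(3) XY by (simp add: run_ops_append)
    then show ?thesis using False d ops1 ops2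
      by (intro exI[of _ "Push d # ops1 @ ops2 @ [Pop]"]) auto
  qed
qed

definition derivable_within :: "nat \<Rightarrow> 'a list \<Rightarrow> nat \<Rightarrow> bool" where
  "derivable_within X w n \<longleftrightarrow> w = [] \<or> (\<exists>k\<le>n. derives G X w k)"

lemma derivable_within_mono: "derivable_within X w n \<Longrightarrow> n \<le> m \<Longrightarrow> derivable_within X w m"
  unfolding derivable_within_def using order_trans by blast

lemma derivable_within_append:
  assumes "derivable_within (nt d) v n1" and "derivable_within Z w n2"
    and "d \<in> \<Sigma>" and "Z \<in> nts" and "Z \<noteq> 0"
  shows "derivable_within Z (v @ w) (n1 + 2 + n2)"
proof (cases "v = []")
  case True
  then show ?thesis using assms(2) derivable_within_mono by simp
next
  case False
  then obtain k1 where "k1 \<le> n1" and k1: "derives G (nt d) v k1"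
    using assms(1) by (auto simp: derivable_within_def)
  moreover obtain k1' where "k1' \<le> k1 + 2" "derives G Z v k1'"
    using derives_nt_retarget[OF k1 assms(4)] by blast
  ultimately have k1': "k1' \<le> n1 + 2" "derives G Z v k1'" by simp_all
  show ?thesis
  proof (cases "w = []")
    case True
    then show ?thesis using k1' by (auto simp: derivable_within_def)
  next
    case False
    then obtain k2 where k2: "k2 \<le> n2" "derives G Z w k2"
      using assms(2) by (auto simp: derivable_within_def)
    have "Bin Z Z Z \<in> prods_osg"
      using assms(4,5) by (auto simp: Bin_mem_prods_osg mem_nts_iff)
    from derives_Bin[OF this k1'(2) k2(2)] show ?thesis
      using k1' k2 by (auto simp: derivable_within_def intro!: exI[of _ "k1' + k2"])
  qed
qed

lemma derivable_within_Cons: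
  assumes "derivable_within (nt c) w n" and "c \<in> \<Sigma>"
  shows "derivable_within (nt c) (c # w) (Suc n)"
proof -
  have c: "derives G (nt c) [c] 1"
    using derives_Term[of "nt c" c] assms(2) by simp
  show ?thesis
  proof (cases "w = []")
    case True
    then show ?thesis using c by (auto simp: derivable_within_def)
  next
    case False
    then obtain k where k: "k \<le> n" "derives G (nt c) w k"
      using assms(1) by (auto simp: derivable_within_def)
    have "Bin (nt c) (nt c) (nt c) \<in> prods_osg"
      using assms(2) by (auto simp: Bin_mem_prods_osg)
    from derives_Bin[OF this c k(2)] show ?thesis
      using k by (auto simp: derivable_within_def intro!: exI[of _ "1 + k"])
  qed
qed

text \<open>\<open>pending st w n\<close>: the output w printed from stack st until the stack is empty splits
  into one block per stack entry, printed while that entry is on top and followed by its Pop,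
  and a last block printed from the empty stack, within a total budget of n operations.\<close>

fun pending :: "'a list \<Rightarrow> 'a list \<Rightarrow> nat \<Rightarrow> bool" where
  "pending [] w n = derivable_within 1 w n"
| "pending (c # st) w n = (\<exists>w1 w2 n1 n2. w = w1 @ w2 \<and> derivable_within (nt c) w1 n1 \<and>
     pending st w2 n2 \<and> n1 + 1 + n2 \<le> n)"

lemma pending_Push:
  assumes "pending (c # st) w n" and "set (c # st) \<subseteq> \<Sigma>"
  shows "pending st w (Suc n)"
proof -
  obtain w1 w2 n1 n2 where w: "w = w1 @ w2" "derivable_within (nt c) w1 n1"
    "pending st w2 n2" "n1 + 1 + n2 \<le> n"
    using assms(1) by auto
  show ?thesis
  proof (cases st)
    case Nil
    then have "derivable_within 1 w (n1 + 2 + n2)"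
      using derivable_within_append[of c w1 n1 1 w2 n2] w assms(2) by simp
    then show ?thesis using Nil w(4) derivable_within_mono by simp
  next
    case (Cons d st')
    then obtain v1 v2 m1 m2 where v: "w2 = v1 @ v2" "derivable_within (nt d) v1 m1"
      "pending st' v2 m2" "m1 + 1 + m2 \<le> n2"
      using w(3) by auto
    have "derivable_within (nt d) (w1 @ v1) (n1 + 2 + m1)"
      using derivable_within_append w(2) v(2) assms(2) Cons by simp
    moreover have "w = (w1 @ v1) @ v2" and "n1 + 2 + m1 + 1 + m2 \<le> Suc n"
      using w v by simp_all
    ultimately have "pending (d # st') w (Suc n)"
      unfolding pending.simps using v(3)
      by (intro exI[of _ "w1 @ v1"] exI[of _ v2] exI[of _ "n1 + 2 + m1"] exI[of _ m2]) simp
    then show ?thesis using Cons by simp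
  qed
qed

lemma pending_Emit:
  assumes "pending (c # st) w n" and "c \<in> \<Sigma>"
  shows "pending (c # st) (c # w) (Suc n)"
proof -
  obtain w1 w2 n1 n2 where w: "w = w1 @ w2" "derivable_within (nt c) w1 n1"
    "pending st w2 n2" "n1 + 1 + n2 \<le> n"
    using assms(1) by auto
  then have "c # w = (c # w1) @ w2" "derivable_within (nt c) (c # w1) (Suc n1)"
    using derivable_within_Cons assms(2) by simp_all
  then show ?thesis
    unfolding pending.simps using w(3,4)
    by (intro exI[of _ "c # w1"] exI[of _ w2] exI[of _ "Suc n1"] exI[of _ n2]) simp
qed

lemma pending_Pop:
  assumes "pending st w n"
  shows "pending (c # st) w (Suc n)"
proof -
  have "w = [] @ w" "derivable_within (nt c) [] 0" "0 + 1 + n \<le> Suc n"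
    by (simp_all add: derivable_within_def)
  then show ?thesis
    unfolding pending.simps using assms
    by (intro exI[of _ "[]"] exI[of _ w] exI[of _ 0] exI[of _ n]) simp
qed

lemma run_ops_pending:
  "run_ops ops st out = Some ([], out') \<Longrightarrow> push_symbols ops \<subseteq> \<Sigma> \<Longrightarrow> set st \<subseteq> \<Sigma> \<Longrightarrow>
   \<exists>w. out' = out @ w \<and> pending st w (length ops)"
proof (induction ops st out rule: run_ops.induct)
  case (1 st out)
  then show ?case by (auto simp: derivable_within_def)
next
  case (2 c ops st out)
  have "\<exists>w. out' = out @ w \<and> pending (c # st) w (length ops)"
    by (rule 2(1)) (use 2(2-4) in auto)
  then obtain w where "out' = out @ w" "pending (c # st) w (length ops)" by blast
  then show ?case using pending_Push[of c st w] 2(3,4) by auto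
next
  case (4 ops c st out)
  have "\<exists>w. out' = (out @ [c]) @ w \<and> pending (c # st) w (length ops)"
    by (rule 4(1)) (use 4(2-4) in auto)
  then obtain w where "out' = (out @ [c]) @ w" "pending (c # st) w (length ops)" by blast
  then show ?case using pending_Emit[of c st w] 4(4) by (intro exI[of _ "c # w"]) auto
next
  case (6 ops c st out)
  have "\<exists>w. out' = out @ w \<and> pending st w (length ops)"
    by (rule 6(1)) (use 6(2-4) in auto)
  then obtain w where "out' = out @ w" "pending st w (length ops)" by blast
  then show ?case using pending_Pop[of st w] by auto
qed auto

lemma osg_le_score:
  assumes "derives G 0 \<sigma> k"
  shows "osg \<Sigma> \<sigma> \<le> k"
proof -
  obtain ops where "push_symbols ops \<subseteq> \<Sigma>" "length ops \<le> k" "run_ops ops [] [] = Some ([], \<sigma>)"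
    using derives_imp_ops[OF assms] by (auto simp: fits_def)
  then show ?thesis using osg_le_length[of \<Sigma> ops \<sigma>] by (simp add: generates_iff)
qed

lemma derives_within_osg:
  assumes "set \<sigma> \<subseteq> \<Sigma>"
  shows "\<exists>k\<le>osg \<Sigma> \<sigma>. derives G 0 \<sigma> k"
proof (cases "\<sigma> = []")
  case True
  then show ?thesis using derives.d_eps[of 0 G] by (auto simp: Eps_mem_prods_osg)
next
  case False
  obtain ops where "generates \<Sigma> ops \<sigma>" and "length ops = osg \<Sigma> \<sigma>"
    using osg_attained[OF assms] .
  then have "pending [] \<sigma> (osg \<Sigma> \<sigma>)"
    using run_ops_pending[of ops "[]" "[]" \<sigma>] by (auto simp: generates_iff)
  with False obtain k where "k \<le> osg \<Sigma> \<sigma>" and T: "derives G 1 \<sigma> k"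
    by (auto simp: derivable_within_def)
  moreover obtain k' where "k' \<le> k" "derives G 0 \<sigma> k'"
    using derives_S_T_retarget[OF T _ _ False, of 0] by auto
  ultimately show ?thesis by (intro exI[of _ k']) auto
qed

lemma sscore_start_eq_osg:
  assumes "set \<sigma> \<subseteq> \<Sigma>"
  shows "sscore G (start G) \<sigma> = enat (osg \<Sigma> \<sigma>)"
proof -
  obtain k where "k \<le> osg \<Sigma> \<sigma>" "derives G 0 \<sigma> k"
    using derives_within_osg[OF assms] by blast
  with osg_le_score have "derives G 0 \<sigma> (osg \<Sigma> \<sigma>)" using le_antisym by blast
  then show ?thesis using osg_le_score by (simp add: sscore_eq_enatI)
qed

lemma cnf_over_G: "cnf_over \<Sigma> G"
proof -
  have "finite prods_osg" using finite_\<Sigma> by (simp add: prods_osg_def nts_def)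
  then show ?thesis
    unfolding cnf_over_def
    by (auto simp: mem_prods_osg split: cnf_prod.split)
qed

lemma card_prods_osg_le:
  "card prods_osg \<le> 1 + 2 + (card \<Sigma> + 2) * card \<Sigma> + (card \<Sigma> + 2) * card \<Sigma>"
proof -
  have "card nts \<le> card {0::nat, 1} + card (nt ` \<Sigma>)"
    unfolding nts_def by (rule card_Un_le)
  also have "\<dots> \<le> card \<Sigma> + 2" using card_image_le[OF finite_\<Sigma>, of nt] by simp
  finally have "card (nts \<times> \<Sigma>) \<le> (card \<Sigma> + 2) * card \<Sigma>"
    unfolding card_cartesian_product by (rule mult_le_mono1)
  then have image_le: "card (f ` (nts \<times> \<Sigma>)) \<le> (card \<Sigma> + 2) * card \<Sigma>"
    for f :: "nat \<times> 'a \<Rightarrow> (nat, 'a) cnf_prod"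
    using card_image_le[of "nts \<times> \<Sigma>" f] finite_\<Sigma> by (simp add: nts_def)
  have "card ((\<lambda>Z. Bin Z 1 1) ` {0, 1} :: (nat, 'a) cnf_prod set) \<le> 2"
    using card_image_le[of "{0::nat, 1}" "\<lambda>Z. Bin Z 1 1"] by simp
  with image_le show ?thesis
    unfolding prods_osg_def
    by (intro order_trans[OF card_Un_le] add_le_mono) (simp_all add: card_Un_le)
qed

end

theorem proposition2:
  shows "\<exists>W C d :: nat. \<forall>\<Sigma> :: 'a set. finite \<Sigma> \<longrightarrow>
     (\<exists>G :: (nat, 'a) sgrammar.
        cnf_over \<Sigma> G \<and> bounded_diff \<Sigma> G W \<and>
        gsize G \<le> C * (card \<Sigma> + 1) ^ d \<and>
        (\<forall>\<sigma>. set \<sigma> \<subseteq> \<Sigma> \<longrightarrow> sscore G (start G) \<sigma> = enat (osg \<Sigma> \<sigma>)))"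
proof (rule exI[of _ 3], rule exI[of _ 10], rule exI[of _ 2], intro allI impI)
  fix \<Sigma> :: "'a set"
  assume "finite \<Sigma>"
  then obtain f :: "'a \<Rightarrow> nat" where "inj_on f \<Sigma>"
    using finite_imp_inj_to_nat_seg by meson
  then interpret osg_grammar \<Sigma> "\<lambda>c. f c + 2"
    using \<open>finite \<Sigma>\<close> by unfold_locales (auto simp: inj_on_def)
  have "gsize G \<le> 1 + 2 + (card \<Sigma> + 2) * card \<Sigma> + (card \<Sigma> + 2) * card \<Sigma>"
    unfolding gsize_def G_simps by (rule card_prods_osg_le)
  also have "\<dots> \<le> 10 * (card \<Sigma> + 1) ^ 2"
    by (simp add: power2_eq_square algebra_simps)
  finally show "\<exists>G :: (nat, 'a) sgrammar. cnf_over \<Sigma> G \<and> bounded_diff \<Sigma> G 3 \<and>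
      gsize G \<le> 10 * (card \<Sigma> + 1) ^ 2 \<and>
      (\<forall>\<sigma>. set \<sigma> \<subseteq> \<Sigma> \<longrightarrow> sscore G (start G) \<sigma> = enat (osg \<Sigma> \<sigma>))"
    using cnf_over_G bounded_diff_G sscore_start_eq_osg by (intro exI[of _ G]) simp
qed

end
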